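(* Let $\nu$ be a probability measure on $[-\pi,\pi]$ that is absolutely continuous with density $p\in\mathcal{L}\cap\mathcal{A}$, and let $u$ denote the uniform distribution on $[-\pi,\pi]$. Let $L/N\to c>0$. For a phase distribution $\mu\in\{\nu,u\}$ let ${\bf V}_\mu$ be the $N\times L$ random Vandermonde matrix with phase distribution $\mu$ and set $m_{\mu,n}:=\lim_{N\to\infty}\mathbb{E}[\mathrm{tr}_L(({\bf V}_\mu^*{\bf V}_\mu)^n)]$. Then $m_{u,n}\le m_{\nu,n}$ for all $n\ge 1$.
   Context: An $N\times L$ random Vandermonde matrix with phase distribution $\mu$ is ${\bf V}=N^{-1/2}\big(e^{-j(k-1)\theta_l}\big)_{1\le k\le N,1\le l\le L}$ where $\theta_1,\dots,\theta_L$ are i.i.d. with law $\mu$ on $[-\pi,\pi]$. $\mathrm{tr}_L=\frac1L\mathrm{Tr}$ is the normalized trace. $\mathcal{L}:=\bigcap_{q\ge1}L^q([-\pi,\pi])$; $\mathcal{A}$ is the class of densities on $[-\pi,\pi]$ with all Fourier coefficients $\int e^{-imt}p(t)\,dt\ge0$, $m\in\mathbb{Z}$. *)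

theory Defs
  imports "HOL-Probability.Probability" "Jordan_Normal_Form.Schur_Decomposition"
begin

definition mat_trace :: "complex mat \<Rightarrow> complex" where
  "mat_trace A = (\<Sum>i<dim_row A. A $$ (i, i))"

text \<open>N x L random Vandermonde matrix for phases theta 0, ..., theta (L-1):
  entry (k,l) (0-based) is N^(-1/2) * exp(-j k theta_l), i.e. the paper's
  exponent (k-1) with 1-based row index k.\<close>
definition vandermonde :: "nat \<Rightarrow> nat \<Rightarrow> (nat \<Rightarrow> real) \<Rightarrow> complex mat" where
  "vandermonde N L \<theta> =
     mat N L (\<lambda>(k, l). exp (- (\<i> * of_nat k * of_real (\<theta> l))) / of_real (sqrt (real N)))"

definition vdm_moment :: "real measure \<Rightarrow> nat \<Rightarrow> nat \<Rightarrow> nat \<Rightarrow> complex" where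
  "vdm_moment \<mu> N L n =
     (\<integral>\<theta>. mat_trace ((mat_adjoint (vandermonde N L \<theta>) * vandermonde N L \<theta>) ^\<^sub>m n) / of_nat L
        \<partial>(PiM {..<L} (\<lambda>_. \<mu>)))"

definition uniform_phase :: "real measure" where
  "uniform_phase = uniform_measure lborel {-pi..pi}"

definition density_phase :: "(real \<Rightarrow> real) \<Rightarrow> real measure" where
  "density_phase p = density lborel (\<lambda>t. ennreal (indicator {-pi..pi} t * p t))"

definition is_phase_density :: "(real \<Rightarrow> real) \<Rightarrow> bool" where
  "is_phase_density p \<longleftrightarrow> p \<in> borel_measurable borel \<and> (\<forall>t\<in>{-pi..pi}. 0 \<le> p t)
     \<and> set_integrable lborel {-pi..pi} p \<and> (LINT t:{-pi..pi}|lborel. p t) = 1"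

definition in_class_L :: "(real \<Rightarrow> real) \<Rightarrow> bool" where
  "in_class_L p \<longleftrightarrow> p \<in> borel_measurable borel \<and>
     (\<forall>q::real. 1 \<le> q \<longrightarrow> set_integrable lborel {-pi..pi} (\<lambda>t. \<bar>p t\<bar> powr q))"

definition fourier_coeff :: "(real \<Rightarrow> real) \<Rightarrow> int \<Rightarrow> complex" where
  "fourier_coeff p m = (LINT t:{-pi..pi}|lborel. exp (- (\<i> * of_int m * of_real t)) * of_real (p t))"

definition in_class_A :: "(real \<Rightarrow> real) \<Rightarrow> bool" where
  "in_class_A p \<longleftrightarrow> is_phase_density p \<and>
     (\<forall>m::int. Im (fourier_coeff p m) = 0 \<and> 0 \<le> Re (fourier_coeff p m))"

end

theory Submission
  imports Defs
begin

text \<open>Expanding the trace entrywise, tr_L((V^* V)^n) is a trigonometric polynomial in the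
  phases theta_1, ..., theta_L with nonnegative coefficients: each entry of V^* V is
  (1/N) * sum_k exp(i k (theta_a - theta_b)), and sums and products keep this form.
  Integrating against mu^L turns a monomial exp(i * sum_l m_l theta_l) into the product of the
  values char mu (m_l) of the characteristic function. For the uniform law char u m = [m = 0],
  while char nu m is a Fourier coefficient of p, nonnegative and equal to 1 at m = 0.
  So the inequality already holds for every N and passes to the limit.\<close>

lemma integral_iexp_int_multiple:
  fixes k :: int
  assumes "k \<noteq> 0"
  shows "(CLBINT t:{-pi..pi}. iexp (of_int k * t)) = 0"
proof -
  let ?F = "\<lambda>t::real. iexp (of_int k * t) / (\<i> * of_int k)"
  have deriv: "(?F has_vector_derivative iexp (of_int k * t)) (at (t::real) within {-pi..pi})" for t
  proof -
    have "((\<lambda>z. exp (\<i> * of_int k * z) / (\<i> * of_int k)) has_field_derivative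
          exp (\<i> * of_int k * of_real t)) (at (of_real t))"
      using assms by (auto intro!: derivative_eq_intros)
    from has_vector_derivative_real_field[OF this] show ?thesis
      by (simp add: mult.assoc)
  qed
  have "\<i> * of_real (of_int k * pi) = \<i> * of_real (of_int k * (-pi)) + 2 * pi * \<i> * of_int k"
    by (simp add: algebra_simps)
  then have "iexp (of_int k * pi) = iexp (of_int k * (-pi)) * exp (2 * pi * \<i> * of_int k)"
    by (metis exp_add)
  also have "exp (2 * pi * \<i> * of_int k) = 1"
    using exp_integer_2pi[of "of_int k"] by (simp add: algebra_simps)
  finally have periodic: "?F pi = ?F (-pi)" by simp
  have "(CLBINT t=-pi..pi. iexp (of_int k * t)) = ?F pi - ?F (-pi)"
    using deriv by (intro interval_integral_FTC_finite) (auto intro!: continuous_intros)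
  with periodic show ?thesis by (simp add: interval_integral_Icc)
qed

lemma real_distribution_uniform_phase: "real_distribution uniform_phase"
  unfolding uniform_phase_def real_distribution_def real_distribution_axioms_def
  by (auto intro!: prob_space_uniform_measure)

lemma uniform_phase_eq_density:
  "uniform_phase = density lborel (\<lambda>t. ennreal (indicator {-pi..pi} t / (2 * pi)))"
proof -
  have "1 / ennreal (2 * pi) = ennreal (1 / (2 * pi))"
    using divide_ennreal[of 1 "2 * pi"] by simp
  then show ?thesis
    unfolding uniform_phase_def uniform_measure_def
    by (intro density_cong) (auto simp: divide_ennreal split: split_indicator)
qed

lemma char_uniform_phase: "char uniform_phase (of_int k) = (if k = 0 then 1 else 0)"
proof (cases "k = 0")
  case True
  then show ?thesis
    using real_distribution.char_zero[OF real_distribution_uniform_phase] by simp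
next
  case False
  have "char uniform_phase (of_int k) =
      (CLINT t|lborel. (indicator {-pi..pi} t / (2 * pi)) *\<^sub>R iexp (of_int k * t))"
    unfolding char_def uniform_phase_eq_density by (subst integral_density) auto
  also have "\<dots> = (1 / (2 * pi)) *\<^sub>R (CLBINT t:{-pi..pi}. iexp (of_int k * t))"
    unfolding set_lebesgue_integral_def
    by (subst integral_scaleR_right[symmetric])
       (auto intro!: Bochner_Integration.integral_cong split: split_indicator)
  finally show ?thesis
    using False integral_iexp_int_multiple by simp
qed

lemma real_distribution_density_phase:
  assumes "is_phase_density p"
  shows "real_distribution (density_phase p)"
proof -
  have [measurable]: "p \<in> borel_measurable borel" and int: "set_integrable lborel {-pi..pi} p"
    and total: "(LINT t:{-pi..pi}|lborel. p t) = 1" and nonneg: "\<forall>t\<in>{-pi..pi}. 0 \<le> p t"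
    using assms unfolding is_phase_density_def by auto
  have "emeasure (density_phase p) UNIV = (\<integral>\<^sup>+ t. ennreal (indicator {-pi..pi} t * p t) \<partial>lborel)"
    unfolding density_phase_def by (simp add: emeasure_density)
  also have "\<dots> = ennreal (LINT t:{-pi..pi}|lborel. p t)"
    using int nonneg unfolding set_integrable_def set_lebesgue_integral_def
    by (subst nn_integral_eq_integral) (auto split: split_indicator)
  finally have "emeasure (density_phase p) UNIV = 1"
    using total by simp
  then show ?thesis
    unfolding real_distribution_def real_distribution_axioms_def prob_space_def prob_space_axioms_def
    by (auto simp: density_phase_def intro: finite_measureI)
qed

lemma char_density_phase:
  assumes "is_phase_density p"
  shows "char (density_phase p) (of_int k) = fourier_coeff p (- k)"
proof -
  have [measurable]: "p \<in> borel_measurable borel" and nonneg: "\<forall>t\<in>{-pi..pi}. 0 \<le> p t"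
    using assms unfolding is_phase_density_def by auto
  have "char (density_phase p) (of_int k) =
      (CLINT t|lborel. (indicator {-pi..pi} t * p t) *\<^sub>R iexp (of_int k * t))"
    unfolding char_def density_phase_def
    by (subst integral_density) (use nonneg in \<open>auto split: split_indicator\<close>)
  also have "\<dots> = fourier_coeff p (- k)"
    unfolding fourier_coeff_def set_lebesgue_integral_def
    by (intro Bochner_Integration.integral_cong) (auto simp: scaleR_conv_of_real mult_ac)
  finally show ?thesis .
qed

definition trig_monomial :: "nat \<Rightarrow> (nat \<Rightarrow> int) \<Rightarrow> (nat \<Rightarrow> real) \<Rightarrow> complex" where
  "trig_monomial L m \<theta> = (\<Prod>l<L. iexp (of_int (m l) * \<theta> l))"

definition trig_poly :: "nat \<Rightarrow> (real \<times> (nat \<Rightarrow> int)) list \<Rightarrow> (nat \<Rightarrow> real) \<Rightarrow> complex" where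
  "trig_poly L cs \<theta> = (\<Sum>(r, m)\<leftarrow>cs. of_real r * trig_monomial L m \<theta>)"

definition nonneg_coeff_trig_poly :: "nat \<Rightarrow> ((nat \<Rightarrow> real) \<Rightarrow> complex) \<Rightarrow> bool" where
  "nonneg_coeff_trig_poly L F \<longleftrightarrow> (\<exists>cs. (\<forall>(r, m)\<in>set cs. 0 \<le> r) \<and> F = trig_poly L cs)"

lemma trig_monomial_add:
  "trig_monomial L (\<lambda>l. m l + n l) \<theta> = trig_monomial L m \<theta> * trig_monomial L n \<theta>"
  unfolding trig_monomial_def prod.distrib[symmetric]
  by (intro prod.cong refl) (simp add: exp_add[symmetric] algebra_simps)

lemma trig_monomial_single:
  assumes "a < L"
  shows "trig_monomial L (\<lambda>l. if l = a then k else 0) \<theta> = iexp (of_int k * \<theta> a)"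
proof -
  have "trig_monomial L (\<lambda>l. if l = a then k else 0) \<theta> =
      (\<Prod>l<L. if l = a then iexp (of_int k * \<theta> a) else 1)"
    unfolding trig_monomial_def by (intro prod.cong) auto
  with assms show ?thesis by simp
qed

lemma trig_poly_append: "trig_poly L (cs @ ds) \<theta> = trig_poly L cs \<theta> + trig_poly L ds \<theta>"
  by (simp add: trig_poly_def)

lemma trig_poly_mult:
  "trig_poly L [(r * s, \<lambda>l. m l + n l). (r, m) \<leftarrow> cs, (s, n) \<leftarrow> ds] \<theta> =
     trig_poly L cs \<theta> * trig_poly L ds \<theta>"
proof (induction cs)
  case Nil
  then show ?case by (simp add: trig_poly_def)
next
  case (Cons c cs)
  obtain r m where c: "c = (r, m)" by force
  have "trig_poly L [(r * s, \<lambda>l. m l + n l). (s, n) \<leftarrow> ds] \<theta> =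
      of_real r * trig_monomial L m \<theta> * trig_poly L ds \<theta>"
    unfolding trig_poly_def
    by (induction ds) (auto simp: trig_monomial_add algebra_simps)
  with Cons show ?case
    by (simp add: c trig_poly_append) (simp add: trig_poly_def algebra_simps)
qed

lemma nonneg_coeff_trig_poly_monomial:
  "0 \<le> r \<Longrightarrow> nonneg_coeff_trig_poly L (\<lambda>\<theta>. of_real r * trig_monomial L m \<theta>)"
  unfolding nonneg_coeff_trig_poly_def by (intro exI[of _ "[(r, m)]"]) (auto simp: trig_poly_def)

lemma nonneg_coeff_trig_poly_const: "0 \<le> r \<Longrightarrow> nonneg_coeff_trig_poly L (\<lambda>_. of_real r)"
  using nonneg_coeff_trig_poly_monomial[of r L "\<lambda>_. 0"] by (simp add: trig_monomial_def)

lemma nonneg_coeff_trig_poly_add: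
  assumes "nonneg_coeff_trig_poly L F" "nonneg_coeff_trig_poly L G"
  shows "nonneg_coeff_trig_poly L (\<lambda>\<theta>. F \<theta> + G \<theta>)"
proof -
  obtain cs ds where "\<forall>(r, m)\<in>set cs. 0 \<le> r" "F = trig_poly L cs"
    and "\<forall>(r, m)\<in>set ds. 0 \<le> r" "G = trig_poly L ds"
    using assms unfolding nonneg_coeff_trig_poly_def by blast
  then show ?thesis
    unfolding nonneg_coeff_trig_poly_def by (intro exI[of _ "cs @ ds"]) (auto simp: trig_poly_append)
qed

lemma nonneg_coeff_trig_poly_mult:
  assumes "nonneg_coeff_trig_poly L F" "nonneg_coeff_trig_poly L G"
  shows "nonneg_coeff_trig_poly L (\<lambda>\<theta>. F \<theta> * G \<theta>)"
proof -
  obtain cs ds where "\<forall>(r, m)\<in>set cs. 0 \<le> r" "F = trig_poly L cs"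
    and "\<forall>(r, m)\<in>set ds. 0 \<le> r" "G = trig_poly L ds"
    using assms unfolding nonneg_coeff_trig_poly_def by blast
  then show ?thesis
    unfolding nonneg_coeff_trig_poly_def
    by (intro exI[of _ "[(r * s, \<lambda>l. m l + n l). (r, m) \<leftarrow> cs, (s, n) \<leftarrow> ds]"])
       (force intro: mult_nonneg_nonneg simp: trig_poly_mult)
qed

lemma nonneg_coeff_trig_poly_sum:
  "finite A \<Longrightarrow> (\<And>a. a \<in> A \<Longrightarrow> nonneg_coeff_trig_poly L (F a)) \<Longrightarrow>
     nonneg_coeff_trig_poly L (\<lambda>\<theta>. \<Sum>a\<in>A. F a \<theta>)"
  by (induction A rule: finite_induct)
     (use nonneg_coeff_trig_poly_const[of 0] in \<open>auto intro: nonneg_coeff_trig_poly_add\<close>)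

lemma integral_trig_monomial:
  assumes "real_distribution \<mu>"
  shows "integrable (PiM {..<L} (\<lambda>_. \<mu>)) (trig_monomial L m)"
    and "(\<integral>\<theta>. trig_monomial L m \<theta> \<partial>PiM {..<L} (\<lambda>_. \<mu>)) = (\<Prod>l<L. char \<mu> (of_int (m l)))"
proof -
  interpret real_distribution \<mu> by (rule assms)
  interpret product_sigma_finite "\<lambda>_. \<mu>" by unfold_locales
  have int: "integrable \<mu> (\<lambda>t. iexp (of_int k * t))" for k
    by (intro integrable_iexp) auto
  show "integrable (PiM {..<L} (\<lambda>_. \<mu>)) (trig_monomial L m)"
    unfolding trig_monomial_def[abs_def] using int by (intro product_integrable_prod) auto
  show "(\<integral>\<theta>. trig_monomial L m \<theta> \<partial>PiM {..<L} (\<lambda>_. \<mu>)) = (\<Prod>l<L. char \<mu> (of_int (m l)))"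
    unfolding trig_monomial_def char_def using int by (intro product_integral_prod) auto
qed

lemma integral_trig_poly:
  assumes "real_distribution \<mu>"
  shows "integrable (PiM {..<L} (\<lambda>_. \<mu>)) (trig_poly L cs) \<and>
    (\<integral>\<theta>. trig_poly L cs \<theta> \<partial>PiM {..<L} (\<lambda>_. \<mu>)) =
      (\<Sum>(r, m)\<leftarrow>cs. of_real r * (\<Prod>l<L. char \<mu> (of_int (m l))))"
proof (induction cs)
  case Nil
  then show ?case by (simp add: trig_poly_def[abs_def])
next
  case (Cons c cs)
  obtain r m where c: "c = (r, m)" by force
  have "trig_poly L (c # cs) = (\<lambda>\<theta>. of_real r * trig_monomial L m \<theta> + trig_poly L cs \<theta>)"
    by (auto simp: trig_poly_def c)
  with Cons integral_trig_monomial[OF assms, of L m] show ?case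
    by (simp add: c)
qed

lemma integral_nonneg_coeff_trig_poly_mono:
  fixes \<phi> \<psi> :: "int \<Rightarrow> real"
  assumes "real_distribution \<mu>" "real_distribution \<nu>"
    and char_\<mu>: "\<And>k. char \<mu> (of_int k) = of_real (\<phi> k)"
    and char_\<nu>: "\<And>k. char \<nu> (of_int k) = of_real (\<psi> k)"
    and "\<And>k. 0 \<le> \<phi> k" "\<And>k. \<phi> k \<le> \<psi> k"
    and "nonneg_coeff_trig_poly L F"
  shows "Re (\<integral>\<theta>. F \<theta> \<partial>PiM {..<L} (\<lambda>_. \<mu>)) \<le> Re (\<integral>\<theta>. F \<theta> \<partial>PiM {..<L} (\<lambda>_. \<nu>))"
proof -
  obtain cs where nonneg: "\<forall>(r, m)\<in>set cs. 0 \<le> r" and F: "F = trig_poly L cs"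
    using assms(7) unfolding nonneg_coeff_trig_poly_def by blast
  have integral_F: "(\<integral>\<theta>. F \<theta> \<partial>PiM {..<L} (\<lambda>_. \<mu>')) =
      of_real (\<Sum>(r, m)\<leftarrow>cs. r * (\<Prod>l<L. \<gamma> (m l)))"
    if "real_distribution \<mu>'" "\<And>k. char \<mu>' (of_int k) = of_real (\<gamma> k)" for \<mu>' \<gamma>
    using integral_trig_poly[OF that(1), of L cs] unfolding F that(2)
    by (simp add: split_def sum_list_of_real[symmetric] comp_def flip: of_real_prod of_real_mult)
  have "(\<Sum>(r, m)\<leftarrow>cs. r * (\<Prod>l<L. \<phi> (m l))) \<le> (\<Sum>(r, m)\<leftarrow>cs. r * (\<Prod>l<L. \<psi> (m l)))"
    using nonneg assms(5,6)
    by (intro sum_list_mono) (auto intro!: mult_left_mono prod_mono)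
  then show ?thesis
    using integral_F[OF assms(1) char_\<mu>] integral_F[OF assms(2) char_\<nu>] by simp
qed

lemma mat_adjoint_carrier: "V \<in> carrier_mat N L \<Longrightarrow> mat_adjoint V \<in> carrier_mat L N"
  unfolding mat_adjoint_def by auto

lemma index_mat_adjoint_mult:
  assumes "V \<in> carrier_mat N L" "a < L" "b < L"
  shows "(mat_adjoint V * V) $$ (a, b) = (\<Sum>k<N. cnj (V $$ (k, a)) * V $$ (k, b))"
proof -
  have "row (mat_adjoint V) a = conjugate (col V a)"
    unfolding mat_adjoint_def using assms by (subst mat_of_rows_row) (auto simp: cols_def)
  then show ?thesis
    using assms mat_adjoint_carrier[OF assms(1)]
    by (auto simp: scalar_prod_def atLeast0LessThan intro!: sum.cong)
qed

lemma nonneg_coeff_trig_poly_mat_pow: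
  assumes carrier: "\<And>\<theta>. M \<theta> \<in> carrier_mat n n"
    and entries: "\<And>i j. i < n \<Longrightarrow> j < n \<Longrightarrow> nonneg_coeff_trig_poly L (\<lambda>\<theta>. M \<theta> $$ (i, j))"
  shows "i < n \<Longrightarrow> j < n \<Longrightarrow> nonneg_coeff_trig_poly L (\<lambda>\<theta>. (M \<theta> ^\<^sub>m k) $$ (i, j))"
proof (induction k arbitrary: i j)
  case 0
  have "(M \<theta> ^\<^sub>m 0) $$ (i, j) = of_real (of_bool (i = j))" for \<theta>
    using 0 carrier[of \<theta>] by auto
  then show ?case
    using nonneg_coeff_trig_poly_const[of "of_bool (i = j)" L] by simp
next
  case (Suc k)
  have "nonneg_coeff_trig_poly L (\<lambda>\<theta>. \<Sum>l<n. (M \<theta> ^\<^sub>m k) $$ (i, l) * M \<theta> $$ (l, j))"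
    using Suc by (intro nonneg_coeff_trig_poly_sum nonneg_coeff_trig_poly_mult entries) auto
  moreover have "(M \<theta> ^\<^sub>m Suc k) $$ (i, j) = (\<Sum>l<n. (M \<theta> ^\<^sub>m k) $$ (i, l) * M \<theta> $$ (l, j))" for \<theta>
    using Suc.prems carrier[of \<theta>] pow_carrier_mat[OF carrier, of \<theta> k]
    by (simp add: scalar_prod_def atLeast0LessThan)
  ultimately show ?case by simp
qed

lemma nonneg_coeff_trig_poly_mat_trace:
  assumes "\<And>\<theta>. M \<theta> \<in> carrier_mat n n"
    and "\<And>i j. i < n \<Longrightarrow> j < n \<Longrightarrow> nonneg_coeff_trig_poly L (\<lambda>\<theta>. M \<theta> $$ (i, j))"
  shows "nonneg_coeff_trig_poly L (\<lambda>\<theta>. mat_trace (M \<theta>))"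
proof -
  have "dim_row (M \<theta>) = n" for \<theta>
    using assms(1) by (rule carrier_matD)
  then show ?thesis
    unfolding mat_trace_def using assms(2) by (auto intro: nonneg_coeff_trig_poly_sum)
qed

lemma vandermonde_gram_entry:
  assumes "a < L" "b < L"
  shows "(mat_adjoint (vandermonde N L \<theta>) * vandermonde N L \<theta>) $$ (a, b) =
    (\<Sum>k<N. of_real (1 / real N) * (iexp (real k * \<theta> a) * iexp (- real k * \<theta> b)))"
proof -
  have "of_real (sqrt (real N)) * of_real (sqrt (real N)) = (of_nat N :: complex)"
    by (simp flip: of_real_mult)
  then show ?thesis
    using assms
    by (subst index_mat_adjoint_mult[where N = N and L = L])
       (auto simp: vandermonde_def exp_cnj field_simps intro!: sum.cong)
qed

lemma nonneg_coeff_trig_poly_vandermonde_gram: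
  assumes "a < L" "b < L"
  shows "nonneg_coeff_trig_poly L
    (\<lambda>\<theta>. (mat_adjoint (vandermonde N L \<theta>) * vandermonde N L \<theta>) $$ (a, b))"
proof -
  have "nonneg_coeff_trig_poly L (\<lambda>\<theta>. \<Sum>k<N. of_real (1 / real N) *
      (trig_monomial L (\<lambda>l. if l = a then int k else 0) \<theta> *
       trig_monomial L (\<lambda>l. if l = b then - int k else 0) \<theta>))"
    by (intro nonneg_coeff_trig_poly_sum nonneg_coeff_trig_poly_mult nonneg_coeff_trig_poly_const)
       (use nonneg_coeff_trig_poly_monomial[of 1 L] in auto)
  then show ?thesis
    using assms by (simp add: vandermonde_gram_entry trig_monomial_single)
qed

lemma nonneg_coeff_trig_poly_vdm_moment_integrand:
  "nonneg_coeff_trig_poly L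
     (\<lambda>\<theta>. mat_trace ((mat_adjoint (vandermonde N L \<theta>) * vandermonde N L \<theta>) ^\<^sub>m n) / of_nat L)"
proof -
  have carrier: "mat_adjoint (vandermonde N L \<theta>) * vandermonde N L \<theta> \<in> carrier_mat L L" for \<theta>
  proof -
    have "vandermonde N L \<theta> \<in> carrier_mat N L"
      unfolding vandermonde_def by (rule mat_carrier)
    then show ?thesis by (intro mult_carrier_mat mat_adjoint_carrier)
  qed
  have "nonneg_coeff_trig_poly L (\<lambda>\<theta>. of_real (1 / real L) *
      mat_trace ((mat_adjoint (vandermonde N L \<theta>) * vandermonde N L \<theta>) ^\<^sub>m n))"
    using carrier nonneg_coeff_trig_poly_vandermonde_gram
    by (intro nonneg_coeff_trig_poly_mult nonneg_coeff_trig_poly_const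
        nonneg_coeff_trig_poly_mat_trace nonneg_coeff_trig_poly_mat_pow pow_carrier_mat) auto
  then show ?thesis
    by (simp add: divide_inverse mult.commute of_real_inverse)
qed

lemma vdm_moment_uniform_le_density:
  assumes "in_class_A p"
  shows "Re (vdm_moment uniform_phase N L n) \<le> Re (vdm_moment (density_phase p) N L n)"
proof -
  have density: "is_phase_density p"
    using assms unfolding in_class_A_def by simp
  define \<psi> where "\<psi> k = Re (fourier_coeff p (- k))" for k
  have char_\<nu>: "char (density_phase p) (of_int k) = of_real (\<psi> k)" for k
    using assms unfolding char_density_phase[OF density] \<psi>_def in_class_A_def
    by (simp add: complex_eq_iff)
  have "\<psi> 0 = 1"
    using real_distribution.char_zero[OF real_distribution_density_phase[OF density]]
      char_\<nu>[of 0] by simp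
  moreover have "0 \<le> \<psi> k" for k
    using assms unfolding \<psi>_def in_class_A_def by blast
  ultimately show ?thesis
    unfolding vdm_moment_def
    by (intro integral_nonneg_coeff_trig_poly_mono[where \<phi> = "\<lambda>k. of_bool (k = 0)" and \<psi> = \<psi>]
        real_distribution_uniform_phase real_distribution_density_phase density
        nonneg_coeff_trig_poly_vdm_moment_integrand)
       (auto simp: char_uniform_phase char_\<nu>)
qed

theorem proposition2:
  fixes p :: "real \<Rightarrow> real" and L :: "nat \<Rightarrow> nat" and c :: real
    and m_u m_\<nu> :: "nat \<Rightarrow> real"
  assumes "in_class_L p" and "in_class_A p"
    and "c > 0" and "(\<lambda>N. real (L N) / real N) \<longlonglongrightarrow> c"
    and "\<And>n. (\<lambda>N. vdm_moment uniform_phase N (L N) n) \<longlonglongrightarrow> complex_of_real (m_u n)"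
    and "\<And>n. (\<lambda>N. vdm_moment (density_phase p) N (L N) n) \<longlonglongrightarrow> complex_of_real (m_\<nu> n)"
  shows "\<forall>n\<ge>1. m_u n \<le> m_\<nu> n"
proof (intro allI impI)
  fix n :: nat
  have "(\<lambda>N. Re (vdm_moment uniform_phase N (L N) n)) \<longlonglongrightarrow> m_u n"
    using tendsto_Re[OF assms(5)] by simp
  moreover have "(\<lambda>N. Re (vdm_moment (density_phase p) N (L N) n)) \<longlonglongrightarrow> m_\<nu> n"
    using tendsto_Re[OF assms(6)] by simp
  ultimately show "m_u n \<le> m_\<nu> n"
    using vdm_moment_uniform_le_density[OF assms(2)] by (intro LIMSEQ_le) auto
qed

end
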